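(* Let $p$ be the POP of length 4 defined by the relations $1>2$, $1>3$ and $4>3$; equivalently, avoiding $p$ means simultaneously avoiding the patterns $4312, 4213, 3214, 4123, 3124$. Let $a(n)=|S_n(p)|$. Then $a(0)=a(1)=1$, and for $n\geq 2$, $a(n)=4a(n-1)-3a(n-2)+1$, so that $$a(n)=\frac{3^n-2n+3}{4}\quad(n\geq 0).$$ Moreover, $$\sum_{n\geq 0}a(n)x^n=\frac{(1-2x)^2}{(1-3x)(1-x)^2}.$$
   Context: An $n$-permutation is a word $\pi=\pi_1\cdots\pi_n$ containing each of $1,\ldots,n$ exactly once; $S_n$ is the set of $n$-permutations ($S_0$ consists of the empty permutation). A partially ordered pattern (POP) $p$ of length $k$ is a partial order on the label set $\{1,\ldots,k\}$; it is described by a set of generating relations, where a relation $x>y$ means that in an occurrence the entry in the $x$-th chosen position must be larger than the entry in the $y$-th chosen position, and labels not involved in any relation are unconstrained. An $n$-permutation $\pi$ contains $p$ if there are indices $1\leq i_1<\cdots<i_k\leq n$ such that $\pi_{i_x}>\pi_{i_y}$ whenever $x>y$ in the partial order; otherwise $\pi$ avoids $p$. $S_n(p)$ denotes the set of $n$-permutations avoiding $p$. A permutation $\pi$ avoids a classical pattern $q$ if it has no subsequence order-isomorphic to $q$. *)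

theory Defs
  imports Main "HOL-Computational_Algebra.Formal_Power_Series"
begin

definition perms :: "nat \<Rightarrow> nat list set" where
  "perms n = {w. distinct w \<and> set w = {1..n}}"

text \<open>A POP of length k given by a set R of generating relations; (x,y) \<in> R means x > y.
  Positions are chosen by a strictly increasing map i from labels {1..k} to 0-based indices.\<close>
definition contains_pop :: "nat list \<Rightarrow> nat \<Rightarrow> (nat \<times> nat) set \<Rightarrow> bool" where
  "contains_pop w k R \<longleftrightarrow>
     (\<exists>i::nat \<Rightarrow> nat. strict_mono_on {1..k} i \<and> (\<forall>x\<in>{1..k}. i x < length w) \<and>
        (\<forall>(x,y)\<in>R. w ! (i x) > w ! (i y)))"

definition avoids_pop :: "nat list \<Rightarrow> nat \<Rightarrow> (nat \<times> nat) set \<Rightarrow> bool" where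
  "avoids_pop w k R \<longleftrightarrow> \<not> contains_pop w k R"

definition pop_avoiders :: "nat \<Rightarrow> nat \<Rightarrow> (nat \<times> nat) set \<Rightarrow> nat list set" where
  "pop_avoiders n k R = {w \<in> perms n. avoids_pop w k R}"

definition contains_classical :: "nat list \<Rightarrow> nat list \<Rightarrow> bool" where
  "contains_classical w q \<longleftrightarrow>
     (\<exists>i::nat \<Rightarrow> nat. strict_mono_on {0..<length q} i \<and> (\<forall>a<length q. i a < length w) \<and>
        (\<forall>a<length q. \<forall>b<length q. w ! (i a) < w ! (i b) \<longleftrightarrow> q ! a < q ! b))"

definition avoids_classical :: "nat list \<Rightarrow> nat list \<Rightarrow> bool" where
  "avoids_classical w q \<longleftrightarrow> \<not> contains_classical w q"

end

theory Submission
  imports Defs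
begin

unbundle fps_syntax

text \<open>Write p3 for the restriction of p to the labels 1, 2, 3, i.e. the POP 1>2, 1>3.
  Delete the last entry y of a permutation and standardize the rest to w. If the last entry
  of w is at least y, the permutation avoids p iff w does; otherwise it avoids p iff w avoids
  p3, because then the last entry of w can play the role of label 3 in any occurrence.
  Avoiders of p3 begin with 1 or 2, so exactly 2^(y-2) of them have their last entry below y.
  Summing over y gives the number of p-avoiders whose last entry is at least y in closed form,
  and in particular a(n) = a(n-1) + (3^(n-1) - 1)/2, whence the closed form, the recurrence
  and the generating function.\<close>

section \<open>Occurrences of p and p3\<close>

definition contains_p4 :: "'a::linorder list \<Rightarrow> bool" where
  "contains_p4 w \<longleftrightarrow> (\<exists>i1 i2 i3 i4. i1 < i2 \<and> i2 < i3 \<and> i3 < i4 \<and> i4 < length w \<and>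
      w!i2 < w!i1 \<and> w!i3 < w!i1 \<and> w!i3 < w!i4)"

definition contains_p3 :: "'a::linorder list \<Rightarrow> bool" where
  "contains_p3 w \<longleftrightarrow> (\<exists>i1 i2 i3. i1 < i2 \<and> i2 < i3 \<and> i3 < length w \<and>
      w!i2 < w!i1 \<and> w!i3 < w!i1)"

lemma contains_p4_imp_p3: "contains_p4 w \<Longrightarrow> contains_p3 w"
  unfolding contains_p4_def contains_p3_def by (meson less_trans)

lemma contains_p4_map:
  assumes "strict_mono f"
  shows "contains_p4 (map f w) \<longleftrightarrow> contains_p4 w"
proof -
  have "map f w ! i < map f w ! j \<longleftrightarrow> w ! i < w ! j" if "i < length w" "j < length w" for i j
    using that by (simp add: strict_mono_less[OF assms])
  then show ?thesis unfolding contains_p4_def length_map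
    by (intro iff_exI) (meson less_trans)
qed

lemma contains_p3_map:
  assumes "strict_mono f"
  shows "contains_p3 (map f w) \<longleftrightarrow> contains_p3 w"
proof -
  have "map f w ! i < map f w ! j \<longleftrightarrow> w ! i < w ! j" if "i < length w" "j < length w" for i j
    using that by (simp add: strict_mono_less[OF assms])
  then show ?thesis unfolding contains_p3_def length_map
    by (intro iff_exI) (meson less_trans)
qed

lemma contains_p4_snoc:
  "contains_p4 (xs @ [y]) \<longleftrightarrow> contains_p4 xs \<or>
     (\<exists>i1 i2 i3. i1 < i2 \<and> i2 < i3 \<and> i3 < length xs \<and>
        xs!i2 < xs!i1 \<and> xs!i3 < xs!i1 \<and> xs!i3 < y)"
  (is "_ \<longleftrightarrow> _ \<or> ?ends_below")
proof
  assume "contains_p4 (xs @ [y])"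
  then obtain i1 i2 i3 i4 where i: "i1 < i2" "i2 < i3" "i3 < i4" "i4 \<le> length xs"
    and v: "(xs@[y])!i2 < (xs@[y])!i1" "(xs@[y])!i3 < (xs@[y])!i1" "(xs@[y])!i3 < (xs@[y])!i4"
    unfolding contains_p4_def by auto
  have vals: "xs!i2 < xs!i1" "xs!i3 < xs!i1" using i v by (simp_all add: nth_append)
  show "contains_p4 xs \<or> ?ends_below"
  proof (cases "i4 = length xs")
    case True
    then have "i3 < length xs" "xs!i3 < y" using i v by (simp_all add: nth_append)
    then show ?thesis using i vals by blast
  next
    case False
    then have "i4 < length xs" "xs!i3 < xs!i4" using i v by (simp_all add: nth_append)
    then show ?thesis unfolding contains_p4_def using i vals by blast
  qed
next
  assume "contains_p4 xs \<or> ?ends_below"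
  then show "contains_p4 (xs @ [y])"
  proof
    assume "contains_p4 xs"
    then obtain i1 i2 i3 i4 where "i1 < i2" "i2 < i3" "i3 < i4" "i4 < length xs"
      "xs!i2 < xs!i1" "xs!i3 < xs!i1" "xs!i3 < xs!i4" unfolding contains_p4_def by blast
    then show ?thesis unfolding contains_p4_def
      by (intro exI[of _ i1] exI[of _ i2] exI[of _ i3] exI[of _ i4]) (simp add: nth_append)
  next
    assume ?ends_below
    then obtain i1 i2 i3 where "i1 < i2" "i2 < i3" "i3 < length xs"
      "xs!i2 < xs!i1" "xs!i3 < xs!i1" "xs!i3 < y" by blast
    then show ?thesis unfolding contains_p4_def
      by (intro exI[of _ i1] exI[of _ i2] exI[of _ i3] exI[of _ "length xs"]) (simp add: nth_append)
  qed
qed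

lemma contains_p4_snoc_below_last:
  assumes "xs \<noteq> []" "y < last xs"
  shows "contains_p4 (xs @ [y]) \<longleftrightarrow> contains_p4 xs"
proof -
  have "contains_p4 xs" if "i1 < i2" "i2 < i3" "i3 < length xs"
    "xs!i2 < xs!i1" "xs!i3 < xs!i1" "xs!i3 < y" for i1 i2 i3
  proof -
    have last: "last xs = xs ! (length xs - 1)" using assms(1) by (simp add: last_conv_nth)
    then have "i3 \<noteq> length xs - 1" using that assms(2) by auto
    then have "i3 < length xs - 1" using that(3) by linarith
    then show ?thesis unfolding contains_p4_def using that assms(2) last
      by (intro exI[of _ i1] exI[of _ i2] exI[of _ i3] exI[of _ "length xs - 1"]) auto
  qed
  then show ?thesis using contains_p4_snoc by blast
qed

lemma contains_p4_snoc_above_last: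
  assumes "xs \<noteq> []" "last xs < y"
  shows "contains_p4 (xs @ [y]) \<longleftrightarrow> contains_p3 xs"
proof
  assume "contains_p4 (xs @ [y])"
  then show "contains_p3 xs"
    using contains_p4_snoc contains_p4_imp_p3 unfolding contains_p3_def by blast
next
  assume "contains_p3 xs"
  then obtain i1 i2 i3 where i: "i1 < i2" "i2 < i3" "i3 < length xs"
    and v: "xs!i2 < xs!i1" "xs!i3 < xs!i1" unfolding contains_p3_def by blast
  let ?l = "length xs - 1"
  have last: "last xs = xs ! ?l" using assms(1) by (simp add: last_conv_nth)
  show "contains_p4 (xs @ [y])"
  proof (cases "xs!i3 < y")
    case True
    then show ?thesis using i v contains_p4_snoc by blast
  next
    case False
    \<comment> \<open>then the last entry of xs, being below xs!i3, can play the role of label 3\<close>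
    then have "i3 \<noteq> ?l" using assms(2) last by auto
    then have "i2 < ?l" "?l < length xs" using i by linarith+
    moreover have "xs ! ?l < xs!i1" "xs ! ?l < y" using False v assms(2) last by auto
    ultimately show ?thesis unfolding contains_p4_snoc using i(1) v(1) by blast
  qed
qed

lemma contains_p3_Cons:
  assumes "distinct xs"
  shows "contains_p3 (x # xs) \<longleftrightarrow>
    contains_p3 xs \<or> (\<exists>a\<in>set xs. \<exists>b\<in>set xs. a \<noteq> b \<and> a < x \<and> b < x)"
proof
  assume "contains_p3 (x # xs)"
  then obtain i1 i2 i3 where i: "i1 < i2" "i2 < i3" "i3 < Suc (length xs)"
    and v: "(x#xs)!i2 < (x#xs)!i1" "(x#xs)!i3 < (x#xs)!i1" unfolding contains_p3_def by auto
  show "contains_p3 xs \<or> (\<exists>a\<in>set xs. \<exists>b\<in>set xs. a \<noteq> b \<and> a < x \<and> b < x)"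
  proof (cases i1)
    case 0
    then obtain a b where ab: "i2 = Suc a" "i3 = Suc b"
      using i gr0_implies_Suc[of i2] gr0_implies_Suc[of i3] by auto
    then have "xs!a \<in> set xs" "xs!b \<in> set xs" "xs!a \<noteq> xs!b" using i assms
      by (simp_all add: nth_eq_iff_index_eq)
    moreover have "xs!a < x" "xs!b < x" using v 0 ab by simp_all
    ultimately show ?thesis by blast
  next
    case (Suc k)
    then have "contains_p3 xs" unfolding contains_p3_def using i v
      by (intro exI[of _ k] exI[of _ "i2 - 1"] exI[of _ "i3 - 1"]) (auto simp: nth_Cons')
    then show ?thesis ..
  qed
next
  assume "contains_p3 xs \<or> (\<exists>a\<in>set xs. \<exists>b\<in>set xs. a \<noteq> b \<and> a < x \<and> b < x)"
  then show "contains_p3 (x # xs)"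
  proof
    assume "contains_p3 xs"
    then obtain i1 i2 i3 where "i1 < i2" "i2 < i3" "i3 < length xs"
      "xs!i2 < xs!i1" "xs!i3 < xs!i1" unfolding contains_p3_def by blast
    then show ?thesis unfolding contains_p3_def
      by (intro exI[of _ "Suc i1"] exI[of _ "Suc i2"] exI[of _ "Suc i3"]) auto
  next
    assume "\<exists>a\<in>set xs. \<exists>b\<in>set xs. a \<noteq> b \<and> a < x \<and> b < x"
    then obtain i j where ij: "i < length xs" "j < length xs" "i \<noteq> j" "xs!i < x" "xs!j < x"
      by (metis in_set_conv_nth)
    have "contains_p3 (x # xs)" if "i' < j'" "j' < length xs" "xs!i' < x" "xs!j' < x" for i' j'
      unfolding contains_p3_def using that
      by (intro exI[of _ 0] exI[of _ "Suc i'"] exI[of _ "Suc j'"]) simp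
    then show ?thesis using ij by (cases "i < j") (auto simp: not_less_iff_gr_or_eq)
  qed
qed

section \<open>Permutations with a prescribed first or last entry\<close>

definition bump :: "nat \<Rightarrow> nat \<Rightarrow> nat" where
  "bump y z = (if y \<le> z then Suc z else z)"

lemma strict_mono_bump: "strict_mono (bump y)"
  by (rule strict_monoI) (auto simp: bump_def)

lemma bump_image:
  assumes "y \<in> {1..Suc m}"
  shows "bump y ` {1..m} = {1..Suc m} - {y}"
proof
  show "bump y ` {1..m} \<subseteq> {1..Suc m} - {y}" by (auto simp: bump_def)
next
  show "{1..Suc m} - {y} \<subseteq> bump y ` {1..m}"
  proof
    fix v assume v: "v \<in> {1..Suc m} - {y}"
    show "v \<in> bump y ` {1..m}"
    proof (cases "v < y")
      case True
      then have "bump y v = v" "v \<in> {1..m}" using v assms by (auto simp: bump_def)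
      then show ?thesis by (metis image_eqI)
    next
      case False
      then have "bump y (v - 1) = v" "v - 1 \<in> {1..m}" using v assms by (auto simp: bump_def)
      then show ?thesis by (metis image_eqI)
    qed
  qed
qed

lemma length_perms: "w \<in> perms n \<Longrightarrow> length w = n"
  unfolding perms_def by (auto dest!: distinct_card)

lemma finite_perms: "finite (perms n)"
proof (rule finite_subset)
  show "perms n \<subseteq> {xs. set xs \<subseteq> {1..n} \<and> length xs = n}"
    using length_perms unfolding perms_def by auto
  show "finite {xs. set xs \<subseteq> {1..n} \<and> length xs = n}"
    by (rule finite_lists_length_eq) simp
qed

lemma perms_0: "perms 0 = {[]}"
  unfolding perms_def by auto

lemma perms_1: "perms (Suc 0) = {[Suc 0]}"
proof
  show "perms (Suc 0) \<subseteq> {[Suc 0]}"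
  proof
    fix w assume w: "w \<in> perms (Suc 0)"
    then obtain a where "w = [a]" using length_perms[OF w] by (auto simp: length_Suc_conv)
    then show "w \<in> {[Suc 0]}" using w unfolding perms_def by auto
  qed
qed (auto simp: perms_def)

lemma perms_Suc_nonempty: "w \<in> perms (Suc m) \<Longrightarrow> w \<noteq> []"
  by (auto simp: perms_def)

lemma last_perms: "w \<in> perms (Suc m) \<Longrightarrow> last w \<in> {1..Suc m}"
  using perms_Suc_nonempty[of w m] by (auto simp: perms_def)

lemma hd_perms: "w \<in> perms (Suc m) \<Longrightarrow> hd w \<in> {1..Suc m}"
  using perms_Suc_nonempty[of w m] by (auto simp: perms_def)

lemma map_bump_perms:
  assumes "y \<in> {1..Suc m}"
  shows "map (bump y) ` perms m = {xs. distinct xs \<and> set xs = {1..Suc m} - {y}}"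
proof
  have inj: "inj_on (bump y) A" for A by (rule strict_mono_imp_inj_on[OF strict_mono_bump])
  show "map (bump y) ` perms m \<subseteq> {xs. distinct xs \<and> set xs = {1..Suc m} - {y}}"
  proof
    fix xs assume "xs \<in> map (bump y) ` perms m"
    then obtain w where "w \<in> perms m" "xs = map (bump y) w" by blast
    then show "xs \<in> {xs. distinct xs \<and> set xs = {1..Suc m} - {y}}"
      using bump_image[OF assms] inj by (simp add: perms_def distinct_map)
  qed
  show "{xs. distinct xs \<and> set xs = {1..Suc m} - {y}} \<subseteq> map (bump y) ` perms m"
  proof
    fix xs assume xs: "xs \<in> {xs. distinct xs \<and> set xs = {1..Suc m} - {y}}"
    then have "xs \<in> lists (bump y ` {1..m})"
      using bump_image[OF assms] by (simp add: lists_eq_set)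
    then obtain w where w: "w \<in> lists {1..m}" "xs = map (bump y) w"
      unfolding lists_image by blast
    have "bump y ` set w = bump y ` {1..m}" using xs bump_image[OF assms] by (simp add: w(2))
    then have "set w = {1..m}" by (simp add: inj_image_eq_iff[OF inj])
    moreover have "distinct w" using xs by (simp add: w(2) distinct_map)
    ultimately have "w \<in> perms m" by (simp add: perms_def)
    then show "xs \<in> map (bump y) ` perms m" using w by blast
  qed
qed

lemma snoc_in_perms_iff:
  "xs @ [y] \<in> perms n \<longleftrightarrow> y \<in> {1..n} \<and> distinct xs \<and> set xs = {1..n} - {y}"
  unfolding perms_def mem_Collect_eq
  by (simp only: distinct_append set_append list.set distinct.simps) blast

lemma Cons_in_perms_iff:
  "y # xs \<in> perms n \<longleftrightarrow> y \<in> {1..n} \<and> distinct xs \<and> set xs = {1..n} - {y}"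
  unfolding perms_def mem_Collect_eq by (simp only: list.set distinct.simps) blast

lemma perms_Suc_last_eq:
  assumes "y \<in> {1..Suc m}"
  shows "{\<pi> \<in> perms (Suc m). last \<pi> = y} = (\<lambda>w. map (bump y) w @ [y]) ` perms m"
proof -
  have "{\<pi> \<in> perms (Suc m). last \<pi> = y} =
        (\<lambda>xs. xs @ [y]) ` {xs. distinct xs \<and> set xs = {1..Suc m} - {y}}"
  proof (intro set_eqI iffI)
    fix \<pi> assume \<pi>: "\<pi> \<in> {\<pi> \<in> perms (Suc m). last \<pi> = y}"
    then have "\<pi> = butlast \<pi> @ [y]"
      using append_butlast_last_id[OF perms_Suc_nonempty, of \<pi> m] by simp
    then obtain xs where \<pi>_eq: "\<pi> = xs @ [y]" by blast
    moreover have "xs \<in> {xs. distinct xs \<and> set xs = {1..Suc m} - {y}}"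
      using \<pi> unfolding \<pi>_eq by (simp add: snoc_in_perms_iff)
    ultimately show "\<pi> \<in> (\<lambda>xs. xs @ [y]) ` {xs. distinct xs \<and> set xs = {1..Suc m} - {y}}"
      by (rule image_eqI)
  next
    fix \<pi> assume "\<pi> \<in> (\<lambda>xs. xs @ [y]) ` {xs. distinct xs \<and> set xs = {1..Suc m} - {y}}"
    then obtain xs where "\<pi> = xs @ [y]" "distinct xs" "set xs = {1..Suc m} - {y}" by blast
    then show "\<pi> \<in> {\<pi> \<in> perms (Suc m). last \<pi> = y}"
      using assms snoc_in_perms_iff[of xs y] by simp
  qed
  then show ?thesis unfolding map_bump_perms[OF assms, symmetric] by (simp only: image_image)
qed

lemma perms_Suc_hd_eq:
  assumes "y \<in> {1..Suc m}"
  shows "{\<pi> \<in> perms (Suc m). hd \<pi> = y} = (\<lambda>w. y # map (bump y) w) ` perms m"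
proof -
  have "{\<pi> \<in> perms (Suc m). hd \<pi> = y} =
        (\<lambda>xs. y # xs) ` {xs. distinct xs \<and> set xs = {1..Suc m} - {y}}"
  proof (intro set_eqI iffI)
    fix \<pi> assume \<pi>: "\<pi> \<in> {\<pi> \<in> perms (Suc m). hd \<pi> = y}"
    then have "\<pi> = y # tl \<pi>" using list.collapse[OF perms_Suc_nonempty, of \<pi> m] by simp
    then obtain xs where \<pi>_eq: "\<pi> = y # xs" by blast
    moreover have "xs \<in> {xs. distinct xs \<and> set xs = {1..Suc m} - {y}}"
      using \<pi> unfolding \<pi>_eq by (simp add: Cons_in_perms_iff)
    ultimately show "\<pi> \<in> (\<lambda>xs. y # xs) ` {xs. distinct xs \<and> set xs = {1..Suc m} - {y}}"
      by (rule image_eqI)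
  next
    fix \<pi> assume "\<pi> \<in> (\<lambda>xs. y # xs) ` {xs. distinct xs \<and> set xs = {1..Suc m} - {y}}"
    then obtain xs where "\<pi> = y # xs" "distinct xs" "set xs = {1..Suc m} - {y}" by blast
    then show "\<pi> \<in> {\<pi> \<in> perms (Suc m). hd \<pi> = y}"
      using assms Cons_in_perms_iff[of y xs] by simp
  qed
  then show ?thesis unfolding map_bump_perms[OF assms, symmetric] by (simp only: image_image)
qed

lemma card_filter_image:
  assumes "inj_on f A"
  shows "card {x \<in> f ` A. P x} = card {x \<in> A. P (f x)}"
proof -
  have "{x \<in> f ` A. P x} = f ` {x \<in> A. P (f x)}" by blast
  then show ?thesis using card_image[OF inj_on_subset[OF assms]] by simp
qed

lemma inj_map_bump: "inj (map (bump y))"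
  by (rule inj_mapI[OF strict_mono_imp_inj_on[OF strict_mono_bump]])

lemma card_perms_Suc_last:
  assumes "y \<in> {1..Suc m}"
  shows "card {\<pi> \<in> perms (Suc m). last \<pi> = y \<and> P \<pi>} =
         card {w \<in> perms m. P (map (bump y) w @ [y])}"
proof -
  have "inj_on (\<lambda>w. map (bump y) w @ [y]) (perms m)"
    by (rule inj_onI) (simp add: inj_eq[OF inj_map_bump])
  moreover have "{\<pi> \<in> perms (Suc m). last \<pi> = y \<and> P \<pi>} =
      {\<pi> \<in> (\<lambda>w. map (bump y) w @ [y]) ` perms m. P \<pi>}"
    unfolding perms_Suc_last_eq[OF assms, symmetric] by simp
  ultimately show ?thesis by (simp add: card_filter_image)
qed

lemma card_perms_Suc_hd:
  assumes "y \<in> {1..Suc m}"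
  shows "card {\<pi> \<in> perms (Suc m). hd \<pi> = y \<and> P \<pi>} =
         card {w \<in> perms m. P (y # map (bump y) w)}"
proof -
  have "inj_on (\<lambda>w. y # map (bump y) w) (perms m)"
    by (rule inj_onI) (simp add: inj_eq[OF inj_map_bump])
  moreover have "{\<pi> \<in> perms (Suc m). hd \<pi> = y \<and> P \<pi>} =
      {\<pi> \<in> (\<lambda>w. y # map (bump y) w) ` perms m. P \<pi>}"
    unfolding perms_Suc_hd_eq[OF assms, symmetric] by simp
  ultimately show ?thesis by (simp add: card_filter_image)
qed

section \<open>Counting avoiders by their last entry\<close>

definition card_avoid_p4_last_ge :: "nat \<Rightarrow> nat \<Rightarrow> nat" where
  "card_avoid_p4_last_ge n y = card {\<pi> \<in> perms n. \<not> contains_p4 \<pi> \<and> y \<le> last \<pi>}"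

definition card_avoid_p3_last_less :: "nat \<Rightarrow> nat \<Rightarrow> nat" where
  "card_avoid_p3_last_less n y = card {\<pi> \<in> perms n. \<not> contains_p3 \<pi> \<and> last \<pi> < y}"

lemma last_map_bump: "w \<in> perms (Suc k) \<Longrightarrow> last (map (bump y) w) = bump y (last w)"
  using perms_Suc_nonempty by (simp add: last_map)

lemma card_avoid_p4_last_eq:
  assumes "y \<in> {1..Suc (Suc k)}"
  shows "card {\<pi> \<in> perms (Suc (Suc k)). last \<pi> = y \<and> \<not> contains_p4 \<pi>} =
         card_avoid_p4_last_ge (Suc k) y + card_avoid_p3_last_less (Suc k) y"
proof -
  let ?A = "{w \<in> perms (Suc k). \<not> contains_p4 w \<and> y \<le> last w}"
  let ?B = "{w \<in> perms (Suc k). \<not> contains_p3 w \<and> last w < y}"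
  have avoid_iff: "\<not> contains_p4 (map (bump y) w @ [y]) \<longleftrightarrow> w \<in> ?A \<union> ?B"
    if w: "w \<in> perms (Suc k)" for w
  proof (cases "y \<le> last w")
    case True
    then have "y < last (map (bump y) w)" using last_map_bump[OF w] by (simp add: bump_def)
    then show ?thesis using True w perms_Suc_nonempty[OF w]
      by (simp add: contains_p4_snoc_below_last contains_p4_map[OF strict_mono_bump])
  next
    case False
    then have "last (map (bump y) w) < y" using last_map_bump[OF w] by (simp add: bump_def)
    then show ?thesis using False w perms_Suc_nonempty[OF w]
      by (simp add: contains_p4_snoc_above_last contains_p3_map[OF strict_mono_bump])
  qed
  have "card {\<pi> \<in> perms (Suc (Suc k)). last \<pi> = y \<and> \<not> contains_p4 \<pi>} =
      card {w \<in> perms (Suc k). \<not> contains_p4 (map (bump y) w @ [y])}"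
    by (rule card_perms_Suc_last[OF assms])
  also have "{w \<in> perms (Suc k). \<not> contains_p4 (map (bump y) w @ [y])} = ?A \<union> ?B"
    using avoid_iff by blast
  also have "card (?A \<union> ?B) = card ?A + card ?B"
    by (rule card_Un_disjoint) (auto simp: finite_perms)
  finally show ?thesis unfolding card_avoid_p4_last_ge_def card_avoid_p3_last_less_def .
qed

lemma card_avoid_p4_last_ge_Suc:
  "card_avoid_p4_last_ge n y =
     card {\<pi> \<in> perms n. last \<pi> = y \<and> \<not> contains_p4 \<pi>} + card_avoid_p4_last_ge n (Suc y)"
proof -
  have "{\<pi> \<in> perms n. \<not> contains_p4 \<pi> \<and> y \<le> last \<pi>} =
      {\<pi> \<in> perms n. last \<pi> = y \<and> \<not> contains_p4 \<pi>} \<union>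
      {\<pi> \<in> perms n. \<not> contains_p4 \<pi> \<and> Suc y \<le> last \<pi>}"
    by auto
  then show ?thesis unfolding card_avoid_p4_last_ge_def
    by (simp add: card_Un_disjoint finite_perms disjoint_iff)
qed

lemma card_avoid_p4_last_ge_eq_0:
  assumes "Suc m < y"
  shows "card_avoid_p4_last_ge (Suc m) y = 0"
proof -
  have "{\<pi> \<in> perms (Suc m). \<not> contains_p4 \<pi> \<and> y \<le> last \<pi>} = {}"
    using assms by (auto dest!: last_perms)
  then show ?thesis unfolding card_avoid_p4_last_ge_def by (simp only: card.empty)
qed

lemma card_avoid_p4_last_ge_1:
  "card_avoid_p4_last_ge (Suc m) 1 = card {\<pi> \<in> perms (Suc m). \<not> contains_p4 \<pi>}"
  using last_perms[of _ m] unfolding card_avoid_p4_last_ge_def by (metis atLeastAtMost_iff)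

lemma card_avoid_p3_last_less_1: "card_avoid_p3_last_less (Suc m) 1 = 0"
proof -
  have "{\<pi> \<in> perms (Suc m). \<not> contains_p3 \<pi> \<and> last \<pi> < 1} = {}"
    by (auto dest!: last_perms)
  then show ?thesis unfolding card_avoid_p3_last_less_def by (simp only: card.empty)
qed

lemma hd_le_2_if_avoid_p3:
  assumes "\<pi> \<in> perms (Suc m)" "\<not> contains_p3 \<pi>"
  shows "hd \<pi> \<le> 2"
proof -
  obtain x xs where \<pi>_eq: "\<pi> = x # xs"
    using perms_Suc_nonempty[OF assms(1)] by (cases \<pi>) auto
  then have xs: "distinct xs" "set xs = {1..Suc m} - {x}" "x \<le> Suc m"
    using assms(1) Cons_in_perms_iff[of x xs] by simp_all
  have "x \<le> 2"
  proof (rule ccontr)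
    assume "\<not> x \<le> 2"
    \<comment> \<open>then 1 and 2 come after x and form an occurrence of p3 with it\<close>
    then have "1 \<in> set xs" "2 \<in> set xs" "1 < x" "2 < x" "(1::nat) \<noteq> 2" using xs by auto
    then have "contains_p3 \<pi>" unfolding \<pi>_eq contains_p3_Cons[OF xs(1)] by blast
    then show False using assms(2) by contradiction
  qed
  then show ?thesis using \<pi>_eq by simp
qed

lemma contains_p3_Cons_bump:
  assumes "w \<in> perms m" "x \<le> 2"
  shows "contains_p3 (x # map (bump x) w) \<longleftrightarrow> contains_p3 w"
proof -
  have distinct: "distinct (map (bump x) w)"
    using assms(1) strict_mono_imp_inj_on[OF strict_mono_bump]
    by (simp add: perms_def distinct_map)
  moreover have "a = 1" if "a \<in> set (map (bump x) w)" "a < x" for a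
  proof -
    have "1 \<le> a" using that(1) assms(1) by (auto simp: perms_def bump_def)
    then show ?thesis using that(2) assms(2) by linarith
  qed
  ultimately have "contains_p3 (x # map (bump x) w) \<longleftrightarrow> contains_p3 (map (bump x) w)"
    unfolding contains_p3_Cons[OF distinct] by blast
  then show ?thesis by (simp add: contains_p3_map[OF strict_mono_bump])
qed

lemma card_avoid_p3_hd:
  assumes "x \<in> {1, 2}"
  shows "card {\<pi> \<in> perms (Suc (Suc k)). hd \<pi> = x \<and> \<not> contains_p3 \<pi> \<and> last \<pi> < y} =
         card {w \<in> perms (Suc k). \<not> contains_p3 w \<and> bump x (last w) < y}"
proof -
  have x: "x \<in> {1..Suc (Suc k)}" "x \<le> 2" using assms by auto
  have "(\<not> contains_p3 (x # map (bump x) w) \<and> last (x # map (bump x) w) < y) \<longleftrightarrow>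
        (\<not> contains_p3 w \<and> bump x (last w) < y)" if "w \<in> perms (Suc k)" for w
    using that x(2) perms_Suc_nonempty[OF that]
    by (simp add: contains_p3_Cons_bump last_map_bump)
  then show ?thesis unfolding card_perms_Suc_hd[OF x(1)] by (metis (lifting))
qed

lemma card_avoid_p3_last_less_cong:
  assumes "\<And>v. v \<in> {1..Suc k} \<Longrightarrow> P v \<longleftrightarrow> v < z"
  shows "card {w \<in> perms (Suc k). \<not> contains_p3 w \<and> P (last w)} =
         card_avoid_p3_last_less (Suc k) z"
proof -
  have "w \<in> perms (Suc k) \<and> \<not> contains_p3 w \<and> P (last w) \<longleftrightarrow>
        w \<in> perms (Suc k) \<and> \<not> contains_p3 w \<and> last w < z" for w
    using assms[OF last_perms] by blast
  then show ?thesis unfolding card_avoid_p3_last_less_def by simp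
qed

text \<open>An avoider of p3 starts with 1 or 2, and deleting its first entry leaves an avoider
  of p3. Since bump 2 fixes the entry 1, the bound y = 2 is not lowered in the second summand.\<close>

lemma card_avoid_p3_last_less_Suc:
  assumes "2 \<le> y"
  shows "card_avoid_p3_last_less (Suc (Suc k)) y =
         card_avoid_p3_last_less (Suc k) (y - 1) +
         card_avoid_p3_last_less (Suc k) (max 2 (y - 1))"
proof -
  let ?S = "\<lambda>x. {\<pi> \<in> perms (Suc (Suc k)). hd \<pi> = x \<and> \<not> contains_p3 \<pi> \<and> last \<pi> < y}"
  have "hd \<pi> = 1 \<or> hd \<pi> = 2" if "\<pi> \<in> perms (Suc (Suc k))" "\<not> contains_p3 \<pi>" for \<pi>
    using hd_perms[OF that(1)] hd_le_2_if_avoid_p3[OF that] by auto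
  then have "{\<pi> \<in> perms (Suc (Suc k)). \<not> contains_p3 \<pi> \<and> last \<pi> < y} = ?S 1 \<union> ?S 2"
    by blast
  then have "card_avoid_p3_last_less (Suc (Suc k)) y = card (?S 1) + card (?S 2)"
    unfolding card_avoid_p3_last_less_def
    by (simp add: card_Un_disjoint finite_perms disjoint_iff)
  also have "card (?S 1) = card {w \<in> perms (Suc k). \<not> contains_p3 w \<and> bump 1 (last w) < y}"
    by (rule card_avoid_p3_hd) simp
  also have "\<dots> = card_avoid_p3_last_less (Suc k) (y - 1)"
    by (rule card_avoid_p3_last_less_cong) (auto simp: bump_def)
  also have "card (?S 2) = card {w \<in> perms (Suc k). \<not> contains_p3 w \<and> bump 2 (last w) < y}"
    by (rule card_avoid_p3_hd) simp
  also have "\<dots> = card_avoid_p3_last_less (Suc k) (max 2 (y - 1))"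
    using assms by (intro card_avoid_p3_last_less_cong) (auto simp: bump_def)
  finally show ?thesis .
qed

lemma card_avoid_p3_last_less_eq:
  assumes "2 \<le> y" "y \<le> Suc (Suc k)"
  shows "card_avoid_p3_last_less (Suc k) y = 2 ^ (y - 2)"
  using assms
proof (induction k arbitrary: y)
  case 0
  have "\<not> contains_p3 [Suc 0]" by (simp add: contains_p3_def)
  then have "{\<pi> \<in> perms (Suc 0). \<not> contains_p3 \<pi> \<and> last \<pi> < 2} = {[Suc 0]}"
    by (auto simp: perms_1)
  moreover have "y = 2" using 0 by simp
  ultimately show ?case by (simp add: card_avoid_p3_last_less_def)
next
  case (Suc k)
  show ?case
  proof (cases "y = 2")
    case True
    then show ?thesis
      using card_avoid_p3_last_less_Suc[of 2 k] card_avoid_p3_last_less_1 Suc.IH[of 2]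
      by (simp add: numeral_2_eq_2)
  next
    case False
    then have "max 2 (y - 1) = y - 1" using Suc.prems by simp
    then have "card_avoid_p3_last_less (Suc (Suc k)) y =
        2 * card_avoid_p3_last_less (Suc k) (y - 1)"
      using card_avoid_p3_last_less_Suc[of y k] Suc.prems by simp
    also have "\<dots> = 2 * 2 ^ (y - 3)" using Suc.IH[of "y - 1"] Suc.prems False by simp
    also have "\<dots> = 2 ^ (y - 2)"
      using Suc.prems False by (simp add: power_Suc[symmetric] Suc_diff_Suc numeral_3_eq_3)
    finally show ?thesis .
  qed
qed

lemma card_avoid_p4_last_ge_eq:
  assumes "2 \<le> y" "y \<le> Suc (Suc k)"
  shows "4 * card_avoid_p4_last_ge (Suc k) y + 2 ^ (y - 1) = 2 ^ (y - 1) * 3 ^ (Suc (Suc k) - y)"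
  using assms
proof (induction k arbitrary: y)
  case 0
  then have "y = 2" by simp
  then show ?case using card_avoid_p4_last_ge_eq_0[of 0 2] by simp
next
  case (Suc k)
  from \<open>y \<le> Suc (Suc (Suc k))\<close> show ?case
  proof (induction y rule: inc_induct)
    case base
    then show ?case using card_avoid_p4_last_ge_eq_0[of "Suc k"] by simp
  next
    case (step n)
    define j where "j = n - 2"
    have j: "n = Suc (Suc j)" using \<open>2 \<le> y\<close> step.hyps(1) unfolding j_def by simp
    define e where "e = Suc (Suc k) - n"
    have e: "Suc (Suc (Suc k)) - n = Suc e" "Suc (Suc (Suc k)) - Suc n = e"
      using step.hyps(2) unfolding e_def by simp_all
    have "card_avoid_p4_last_ge (Suc (Suc k)) n =
        card_avoid_p4_last_ge (Suc k) n + card_avoid_p3_last_less (Suc k) n +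
        card_avoid_p4_last_ge (Suc (Suc k)) (Suc n)"
      using card_avoid_p4_last_ge_Suc[of "Suc (Suc k)" n] card_avoid_p4_last_eq[of n k]
        j step.hyps(2)
      by simp
    moreover have "4 * card_avoid_p4_last_ge (Suc k) n + 2 * 2 ^ j = 2 * (2 ^ j * 3 ^ e)"
      using Suc.IH[of n] step.hyps(2) j unfolding e_def by simp
    moreover have "card_avoid_p3_last_less (Suc k) n = 2 ^ j"
      using card_avoid_p3_last_less_eq[of n k] step.hyps(2) j by simp
    moreover have
      "4 * card_avoid_p4_last_ge (Suc (Suc k)) (Suc n) + 4 * 2 ^ j = 4 * (2 ^ j * 3 ^ e)"
      using step.IH j e(2) by simp
    ultimately show ?case using j e(1) by simp
  qed
qed

lemma card_avoid_p4_eq: "4 * card {\<pi> \<in> perms n. \<not> contains_p4 \<pi>} + 2 * n = 3 ^ n + 3"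
proof (induction n)
  case 0
  have "\<not> contains_p4 ([] :: nat list)" by (simp add: contains_p4_def)
  then have "{\<pi> \<in> perms 0. \<not> contains_p4 \<pi>} = {[]}" unfolding perms_0 by blast
  then show ?case by simp
next
  case (Suc n)
  show ?case
  proof (cases n)
    case 0
    have "\<not> contains_p4 [Suc 0]" by (simp add: contains_p4_def)
    then have "{\<pi> \<in> perms (Suc 0). \<not> contains_p4 \<pi>} = {[Suc 0]}" unfolding perms_1 by blast
    then show ?thesis using 0 by simp
  next
    case (Suc k)
    have "card {\<pi> \<in> perms (Suc (Suc k)). \<not> contains_p4 \<pi>} =
        card {\<pi> \<in> perms (Suc k). \<not> contains_p4 \<pi>} + card_avoid_p4_last_ge (Suc (Suc k)) 2"
      using card_avoid_p4_last_ge_Suc[of "Suc (Suc k)" 1] card_avoid_p4_last_eq[of 1 k]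
        card_avoid_p4_last_ge_1 card_avoid_p3_last_less_1
      by (simp add: numeral_2_eq_2)
    moreover have "4 * card_avoid_p4_last_ge (Suc (Suc k)) 2 + 2 = 2 * 3 ^ Suc k"
      using card_avoid_p4_last_ge_eq[of 2 "Suc k"] by simp
    ultimately show ?thesis using Suc.IH \<open>n = Suc k\<close> by simp
  qed
qed

section \<open>Reformulations of containment\<close>

lemma all_less_4: "(\<forall>a<(4::nat). P a) \<longleftrightarrow> P 0 \<and> P 1 \<and> P 2 \<and> P 3"
  by (auto simp: numeral_eq_Suc less_Suc_eq)

lemma contains_pop_iff_contains_p4:
  "contains_pop w 4 {(1, 2), (1, 3), (4, 3)} \<longleftrightarrow> contains_p4 w"
proof
  assume "contains_pop w 4 {(1, 2), (1, 3), (4, 3)}"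
  then obtain i where i: "strict_mono_on {1..4} i" "\<forall>x\<in>{1..4}. i x < length w"
     "\<forall>(x, y)\<in>{(1::nat, 2::nat), (1, 3), (4, 3)}. w ! i x > w ! i y"
    unfolding contains_pop_def by blast
  have "i 1 < i 2" "i 2 < i 3" "i 3 < i 4" using strict_mono_onD[OF i(1)] by auto
  moreover have "i 4 < length w" using i(2) by simp
  moreover have "w ! i 2 < w ! i 1" "w ! i 3 < w ! i 1" "w ! i 3 < w ! i 4" using i(3) by auto
  ultimately show "contains_p4 w" unfolding contains_p4_def by blast
next
  assume "contains_p4 w"
  then obtain i1 i2 i3 i4 where h: "i1 < i2" "i2 < i3" "i3 < i4" "i4 < length w"
      "w ! i2 < w ! i1" "w ! i3 < w ! i1" "w ! i3 < w ! i4" unfolding contains_p4_def by blast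
  define i where
    "i x = (if x = 1 then i1 else if x = 2 then i2 else if x = 3 then i3 else i4)" for x :: nat
  have labels: "x \<in> {1..4} \<longleftrightarrow> x = 1 \<or> x = 2 \<or> x = 3 \<or> x = 4" for x :: nat by auto
  have "strict_mono_on {1..4} i"
    by (rule strict_mono_onI) (use h(1-3) in \<open>auto simp: labels i_def\<close>)
  moreover have "\<forall>x\<in>{1..4}. i x < length w" using h unfolding labels i_def by auto
  moreover have "\<forall>(x, y)\<in>{(1::nat, 2::nat), (1, 3), (4, 3)}. w ! i x > w ! i y"
    using h by (simp add: i_def)
  ultimately show "contains_pop w 4 {(1, 2), (1, 3), (4, 3)}" unfolding contains_pop_def by blast
qed

lemma contains_classical_length_4:
  assumes "length q = 4"
  shows "contains_classical w q \<longleftrightarrow>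
    (\<exists>i1 i2 i3 i4. i1 < i2 \<and> i2 < i3 \<and> i3 < i4 \<and> i4 < length w \<and>
      (\<forall>a<4. \<forall>b<4. [w!i1, w!i2, w!i3, w!i4] ! a < [w!i1, w!i2, w!i3, w!i4] ! b \<longleftrightarrow> q!a < q!b))"
  (is "_ \<longleftrightarrow> (\<exists>i1 i2 i3 i4. ?occ i1 i2 i3 i4)")
proof
  assume "contains_classical w q"
  then obtain i where i: "strict_mono_on {0..<4} i" "\<forall>a<4. i a < length w"
    "\<forall>a<4. \<forall>b<4. w ! i a < w ! i b \<longleftrightarrow> q ! a < q ! b"
    unfolding contains_classical_def assms by blast
  have "[w ! i 0, w ! i 1, w ! i 2, w ! i 3] ! a = w ! i a" if "a < 4" for a
    using that by (auto simp: numeral_eq_Suc less_Suc_eq)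
  then have "?occ (i 0) (i 1) (i 2) (i 3)"
    using strict_mono_onD[OF i(1)] i(2,3) by simp
  then show "\<exists>i1 i2 i3 i4. ?occ i1 i2 i3 i4" by blast
next
  assume "\<exists>i1 i2 i3 i4. ?occ i1 i2 i3 i4"
  then obtain i1 i2 i3 i4 where h: "?occ i1 i2 i3 i4" by blast
  define i where "i a = [i1, i2, i3, i4] ! a" for a
  have nth_i: "[w!i1, w!i2, w!i3, w!i4] ! a = w ! i a" if "a < 4" for a
    using that by (auto simp: i_def numeral_eq_Suc less_Suc_eq)
  have "strict_mono_on {0..<4} i"
    by (rule strict_mono_onI) (use h in \<open>auto simp: i_def numeral_eq_Suc less_Suc_eq\<close>)
  moreover have "\<forall>a<4. i a < length w" using h unfolding all_less_4 by (simp add: i_def)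
  ultimately show "contains_classical w q"
    unfolding contains_classical_def assms using h nth_i by auto
qed

lemma p4_order_types:
  fixes a b c d :: nat
  assumes "distinct [a, b, c, d]"
  shows "b < a \<and> c < a \<and> c < d \<longleftrightarrow>
    (\<exists>q\<in>{[4,3,1,2], [4,2,1,3], [3,2,1,4], [4,1,2,3], [3,1,2,4::nat]}.
       \<forall>x<4. \<forall>y<4. [a, b, c, d] ! x < [a, b, c, d] ! y \<longleftrightarrow> q ! x < q ! y)"
proof
  assume h: "b < a \<and> c < a \<and> c < d"
  have "a \<noteq> d" "b \<noteq> c" "b \<noteq> d" using assms by auto
  then consider "d < a" "b < c" | "d < a" "c < b" "b < d" | "d < a" "d < b" | "a < d" "b < c"
    | "a < d" "c < b"
    using h by linarith
  then show "\<exists>q\<in>{[4,3,1,2], [4,2,1,3], [3,2,1,4], [4,1,2,3], [3,1,2,4::nat]}.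
     \<forall>x<4. \<forall>y<4. [a, b, c, d] ! x < [a, b, c, d] ! y \<longleftrightarrow> q ! x < q ! y"
  proof cases
    case 1 then show ?thesis using h by (intro bexI[of _ "[4,1,2,3]"]) (auto simp: all_less_4)
  next
    case 2 then show ?thesis using h by (intro bexI[of _ "[4,2,1,3]"]) (auto simp: all_less_4)
  next
    case 3 then show ?thesis using h by (intro bexI[of _ "[4,3,1,2]"]) (auto simp: all_less_4)
  next
    case 4 then show ?thesis using h by (intro bexI[of _ "[3,1,2,4]"]) (auto simp: all_less_4)
  next
    case 5 then show ?thesis using h by (intro bexI[of _ "[3,2,1,4]"]) (auto simp: all_less_4)
  qed
next
  assume "\<exists>q\<in>{[4,3,1,2], [4,2,1,3], [3,2,1,4], [4,1,2,3], [3,1,2,4::nat]}.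
     \<forall>x<4. \<forall>y<4. [a, b, c, d] ! x < [a, b, c, d] ! y \<longleftrightarrow> q ! x < q ! y"
  then obtain q where q: "q \<in> {[4,3,1,2], [4,2,1,3], [3,2,1,4], [4,1,2,3], [3,1,2,4::nat]}"
    "\<forall>x<4. \<forall>y<4. [a, b, c, d] ! x < [a, b, c, d] ! y \<longleftrightarrow> q ! x < q ! y" by blast
  have "b < a \<longleftrightarrow> q ! 1 < q ! 0" "c < a \<longleftrightarrow> q ! 2 < q ! 0" "c < d \<longleftrightarrow> q ! 2 < q ! 3"
    using q(2)[rule_format, of 1 0] q(2)[rule_format, of 2 0] q(2)[rule_format, of 2 3]
    by (simp_all add: numeral_eq_Suc)
  then show "b < a \<and> c < a \<and> c < d" using q(1) by (auto simp: numeral_eq_Suc)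
qed

lemma contains_p4_iff_classical:
  assumes "distinct w"
  shows "contains_p4 w \<longleftrightarrow>
    (\<exists>q\<in>{[4,3,1,2], [4,2,1,3], [3,2,1,4], [4,1,2,3], [3,1,2,4::nat]}. contains_classical w q)"
    (is "_ \<longleftrightarrow> (\<exists>q\<in>?Q. _)")
proof
  assume "contains_p4 w"
  then obtain i1 i2 i3 i4 where h: "i1 < i2" "i2 < i3" "i3 < i4" "i4 < length w"
      "w ! i2 < w ! i1" "w ! i3 < w ! i1" "w ! i3 < w ! i4" unfolding contains_p4_def by blast
  have "distinct [w ! i1, w ! i2, w ! i3, w ! i4]"
    using h assms by (auto simp: nth_eq_iff_index_eq)
  from p4_order_types[OF this] h(5-7) obtain q where q: "q \<in> ?Q" "\<forall>x<4. \<forall>y<4.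
      [w!i1, w!i2, w!i3, w!i4] ! x < [w!i1, w!i2, w!i3, w!i4] ! y \<longleftrightarrow> q ! x < q ! y"
    by blast
  have lq: "length q = 4" using q(1) by auto
  have "contains_classical w q"
    unfolding contains_classical_length_4[OF lq] using h(1-4) q(2) by blast
  then show "\<exists>q\<in>?Q. contains_classical w q" using q(1) by blast
next
  assume "\<exists>q\<in>?Q. contains_classical w q"
  then obtain q where q: "q \<in> ?Q" "contains_classical w q" by blast
  have lq: "length q = 4" using q(1) by auto
  obtain i1 i2 i3 i4 where h: "i1 < i2" "i2 < i3" "i3 < i4" "i4 < length w"
      "\<forall>x<4. \<forall>y<4.
         [w!i1, w!i2, w!i3, w!i4] ! x < [w!i1, w!i2, w!i3, w!i4] ! y \<longleftrightarrow> q ! x < q ! y"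
    using q(2) unfolding contains_classical_length_4[OF lq] by blast
  have "distinct [w ! i1, w ! i2, w ! i3, w ! i4]"
    using h assms by (auto simp: nth_eq_iff_index_eq)
  from p4_order_types[OF this] q(1) h(5)
  have "w ! i2 < w ! i1 \<and> w ! i3 < w ! i1 \<and> w ! i3 < w ! i4"
    by blast
  then show "contains_p4 w" unfolding contains_p4_def using h(1-4) by blast
qed

section \<open>The generating function and the recurrence\<close>

lemma Abs_fps_closed_form:
  fixes r :: "nat \<Rightarrow> real"
  assumes r: "\<And>n. 4 * r n = 3 ^ n - 2 * real n + 3"
  shows "Abs_fps r = (1 - 2 * fps_X) ^ 2 / ((1 - 3 * fps_X) * (1 - fps_X) ^ 2)"
proof -
  let ?f = "Abs_fps r"
  let ?D = "1 - 5 * fps_X + 7 * fps_X ^ 2 - 3 * fps_X ^ 3 :: real fps"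
  let ?N = "1 - 4 * fps_X + 4 * fps_X ^ 2 :: real fps"
  have D: "(1 - 3 * fps_X) * (1 - fps_X) ^ 2 = ?D"
    by (simp add: algebra_simps power2_eq_square power3_eq_cube)
  have N: "(1 - 2 * fps_X) ^ 2 = ?N"
    by (simp add: algebra_simps power2_eq_square)
  have expand: "?f * ?D = ?f - 5 * (fps_X * ?f) + 7 * (fps_X ^ 2 * ?f) - 3 * (fps_X ^ 3 * ?f)"
    by (simp add: algebra_simps)
  have prod: "?f * ?D = ?N"
  proof (rule fps_ext)
    fix n
    have coeff: "(?f * ?D) $ n = r n - 5 * (if n = 0 then 0 else r (n - 1))
        + 7 * (if n < 2 then 0 else r (n - 2)) - 3 * (if n < 3 then 0 else r (n - 3))"
      unfolding expand by (simp add: fps_X_power_mult_nth numeral_fps_const)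
    have coeff_N: "?N $ n = (if n = 0 then 1 else 0) - 4 * (if n = 1 then 1 else 0)
        + 4 * (if n = 2 then 1 else 0)"
      by (simp add: numeral_fps_const)
    have "n = 0 \<or> n = 1 \<or> n = 2 \<or> n = (n - 3) + 3" by linarith
    then consider "n = 0" | "n = 1" | "n = 2" | m where "n = m + 3" by blast
    then show "(?f * ?D) $ n = ?N $ n"
    proof cases
      case 1 then show ?thesis using coeff coeff_N r[of 0] by simp
    next
      case 2 then show ?thesis using coeff coeff_N r[of 0] r[of 1] by simp
    next
      case 3 then show ?thesis using coeff coeff_N r[of 0] r[of 1] r[of 2] by simp
    next
      case 4
      \<comment> \<open>the denominator (1 - 3x)(1 - x)^2 annihilates 3^m, 1 and m\<close>
      have "4 * r (m + 3) = 27 * 3 ^ m - 2 * real m - 3"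
        using r[of "m + 3"] by (simp add: power_add)
      moreover have "4 * r (m + 2) = 9 * 3 ^ m - 2 * real m - 1"
        using r[of "m + 2"] by (simp add: power_add)
      moreover have "4 * r (m + 1) = 3 * 3 ^ m - 2 * real m + 1" using r[of "m + 1"] by simp
      moreover have "4 * r m = 3 ^ m - 2 * real m + 3" using r[of m] by simp
      ultimately have "r (m + 3) - 5 * r (m + 2) + 7 * r (m + 1) - 3 * r m = 0" by linarith
      then show ?thesis using coeff coeff_N 4 by (simp add: numeral_eq_Suc)
    qed
  qed
  have D0: "?D $ 0 \<noteq> 0" by simp
  have "?N / ?D = ?N * inverse ?D" by (rule fps_divide_unit[OF D0])
  also have "\<dots> = ?f * (?D * inverse ?D)" unfolding prod[symmetric] by (simp add: mult.assoc)
  also have "\<dots> = ?f" using inverse_mult_eq_1'[OF D0] by simp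
  finally show ?thesis unfolding D N by simp
qed

lemma closed_form_recurrence:
  fixes a :: "nat \<Rightarrow> nat"
  assumes "\<And>n. 4 * a n + 2 * n = 3 ^ n + 3"
  shows "int (a (n + 2)) = 4 * int (a (n + 1)) - 3 * int (a n) + 1"
proof -
  have "4 * int (a n) + 2 * int n = 3 ^ n + 3"
    using arg_cong[OF assms[of n], of int] by simp
  moreover have "4 * int (a (n + 1)) + 2 * int n + 2 = 3 * 3 ^ n + 3"
    using arg_cong[OF assms[of "n + 1"], of int] by simp
  moreover have "4 * int (a (n + 2)) + 2 * int n + 4 = 9 * 3 ^ n + 3"
    using arg_cong[OF assms[of "n + 2"], of int] by (simp add: power_add)
  ultimately show ?thesis by linarith
qed

theorem theorem3p11:
  fixes a :: "nat \<Rightarrow> nat"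
  defines "p \<equiv> {(1::nat, 2::nat), (1, 3), (4, 3)}"
  defines "a \<equiv> (\<lambda>n. card (pop_avoiders n 4 p))"
  shows "(\<forall>n. pop_avoiders n 4 p =
            {w \<in> perms n. \<forall>q \<in> {[4,3,1,2], [4,2,1,3], [3,2,1,4], [4,1,2,3], [3,1,2,4]}.
                             avoids_classical w q})
       \<and> a 0 = 1 \<and> a 1 = 1
       \<and> (\<forall>n\<ge>2. int (a n) = 4 * int (a (n - 1)) - 3 * int (a (n - 2)) + 1)
       \<and> (\<forall>n. real (a n) = (3 ^ n - 2 * real n + 3) / 4)
       \<and> Abs_fps (\<lambda>n. real (a n)) =
           (1 - 2 * fps_X) ^ 2 / ((1 - 3 * fps_X) * (1 - fps_X) ^ 2)"
proof -
  have avoiders: "pop_avoiders n 4 p = {\<pi> \<in> perms n. \<not> contains_p4 \<pi>}" for n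
    unfolding pop_avoiders_def avoids_pop_def p_def contains_pop_iff_contains_p4 ..
  have count: "4 * a n + 2 * n = 3 ^ n + 3" for n
    unfolding a_def avoiders by (rule card_avoid_p4_eq)
  have real_count: "4 * real (a n) = 3 ^ n - 2 * real n + 3" for n
    using arg_cong[OF count[of n], of real] by simp
  have "pop_avoiders n 4 p = {w \<in> perms n.
      \<forall>q \<in> {[4,3,1,2], [4,2,1,3], [3,2,1,4], [4,1,2,3], [3,1,2,4]}. avoids_classical w q}" for n
    unfolding avoiders avoids_classical_def using contains_p4_iff_classical
    by (auto simp: perms_def)
  moreover have "int (a n) = 4 * int (a (n - 1)) - 3 * int (a (n - 2)) + 1" if "n \<ge> 2" for n
    using closed_form_recurrence[of a "n - 2", OF count] that
    by (simp add: Suc_diff_Suc numeral_2_eq_2)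
  moreover have "a 0 = 1" "a 1 = 1" using count[of 0] count[of 1] by simp_all
  ultimately show ?thesis
    using real_count Abs_fps_closed_form[OF real_count] by (auto simp: field_simps)
qed

end
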